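(* Let $n\ge1$, let $\mu_n$ be a finite positive regular Borel measure on a compact set, $\phi_n,\phi^n_{ij}\in L^\infty(\mu_n)$ for $1\le i<j\le n$, and let $A_n$ be the operator on $L^2(\mu_n)^{(n)}$ given by the upper triangular $n\times n$ operator matrix with all diagonal entries $M_{\phi_n}$ and $(i,j)$ entry $M_{\phi^n_{ij}}$ for $i<j$, and suppose $A_n$ is a direct integral of strongly irreducible operators. If $M_{\phi^n_{i,i+1}}$ is invertible in $\mathscr{L}(L^2(\mu_n))$ for each $i=1,\dots,n-1$, then there is an invertible operator $X_n\in\mathscr{L}(L^2(\mu_n)^{(n)})$ such that $X_nA_nX_n^{-1}$ is the $n\times n$ operator matrix with all diagonal entries $M_{\phi_n}$, all superdiagonal entries ($(i,i+1)$ entries) equal to the identity $I$, and all other entries $0$.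
   Context: $M_\phi$ denotes the multiplication operator $f\mapsto\phi f$ on $L^2(\mu_n)$. An operator is strongly irreducible if its commutant contains no idempotents other than $0$ and $I$; "$A_n$ is a direct integral of strongly irreducible operators" means the fibre matrix (upper triangular with diagonal $\phi_n(\lambda)$ and entries $\phi^n_{ij}(\lambda)$) is strongly irreducible for a.e. $\lambda$. *)

theory Defs
  imports "HOL-Analysis.Analysis"
begin

text \<open>Vectors in L^2(mu)^(n) are represented by functions f :: 'a => nat => complex,
  component i (for i < n, 0-based) being the function x |-> f x i.
  Everything is taken modulo mu-a.e. equality of the components i < n.\<close>

definition L2vec :: "'a measure \<Rightarrow> nat \<Rightarrow> ('a \<Rightarrow> nat \<Rightarrow> complex) set" where
  "L2vec \<mu> n = {f. \<forall>i<n. (\<lambda>x. f x i) \<in> borel_measurable \<mu> \<and>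
                        integrable \<mu> (\<lambda>x. (cmod (f x i))\<^sup>2)}"

definition L2eqv :: "'a measure \<Rightarrow> nat \<Rightarrow> ('a \<Rightarrow> nat \<Rightarrow> complex) \<Rightarrow> ('a \<Rightarrow> nat \<Rightarrow> complex) \<Rightarrow> bool" where
  "L2eqv \<mu> n f g \<longleftrightarrow> (\<forall>i<n. AE x in \<mu>. f x i = g x i)"

definition L2norm :: "'a measure \<Rightarrow> nat \<Rightarrow> ('a \<Rightarrow> nat \<Rightarrow> complex) \<Rightarrow> real" where
  "L2norm \<mu> n f = sqrt (\<Sum>i<n. \<integral>x. (cmod (f x i))\<^sup>2 \<partial>\<mu>)"

type_synonym 'a op = "('a \<Rightarrow> nat \<Rightarrow> complex) \<Rightarrow> ('a \<Rightarrow> nat \<Rightarrow> complex)"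

definition bounded_op :: "'a measure \<Rightarrow> nat \<Rightarrow> 'a op \<Rightarrow> bool" where
  "bounded_op \<mu> n T \<longleftrightarrow>
     (\<forall>f\<in>L2vec \<mu> n. T f \<in> L2vec \<mu> n) \<and>
     (\<forall>f\<in>L2vec \<mu> n. \<forall>g\<in>L2vec \<mu> n. L2eqv \<mu> n f g \<longrightarrow> L2eqv \<mu> n (T f) (T g)) \<and>
     (\<forall>f\<in>L2vec \<mu> n. \<forall>g\<in>L2vec \<mu> n. \<forall>a b::complex.
        L2eqv \<mu> n (T (\<lambda>x i. a * f x i + b * g x i)) (\<lambda>x i. a * T f x i + b * T g x i)) \<and>
     (\<exists>C. \<forall>f\<in>L2vec \<mu> n. L2norm \<mu> n (T f) \<le> C * L2norm \<mu> n f)"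

definition op_eq :: "'a measure \<Rightarrow> nat \<Rightarrow> 'a op \<Rightarrow> 'a op \<Rightarrow> bool" where
  "op_eq \<mu> n S T \<longleftrightarrow> (\<forall>f\<in>L2vec \<mu> n. L2eqv \<mu> n (S f) (T f))"

definition invertible_op :: "'a measure \<Rightarrow> nat \<Rightarrow> 'a op \<Rightarrow> bool" where
  "invertible_op \<mu> n T \<longleftrightarrow> bounded_op \<mu> n T \<and>
     (\<exists>S. bounded_op \<mu> n S \<and> op_eq \<mu> n (T \<circ> S) id \<and> op_eq \<mu> n (S \<circ> T) id)"

definition mult_opmat :: "nat \<Rightarrow> (nat \<Rightarrow> nat \<Rightarrow> 'a \<Rightarrow> complex) \<Rightarrow> 'a op" where
  "mult_opmat n E = (\<lambda>f x i. \<Sum>j<n. E i j x * f x j)"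

text \<open>Multiplication operator M_phi on L^2(mu) (= L^2(mu)^(1)).\<close>
definition mult_op :: "('a \<Rightarrow> complex) \<Rightarrow> 'a op" where
  "mult_op \<phi> = mult_opmat 1 (\<lambda>_ _. \<phi>)"

definition Linfty :: "'a measure \<Rightarrow> ('a \<Rightarrow> complex) set" where
  "Linfty \<mu> = {\<phi>. \<phi> \<in> borel_measurable \<mu> \<and> (\<exists>C. AE x in \<mu>. cmod (\<phi> x) \<le> C)}"

definition regular_borel_on :: "'a::topological_space set \<Rightarrow> 'a measure \<Rightarrow> bool" where
  "regular_borel_on K \<mu> \<longleftrightarrow> sets \<mu> = sets (restrict_space borel K) \<and>
     (\<forall>A\<in>sets \<mu>.
        emeasure \<mu> A = (SUP C\<in>{C. compact C \<and> C \<subseteq> A}. emeasure \<mu> C) \<and>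
        emeasure \<mu> A = (INF U\<in>{U. open U \<and> A \<subseteq> U}. emeasure \<mu> (U \<inter> K)))"

text \<open>Finite complex matrices as nat => nat => complex, indices < n.\<close>
definition mmul :: "nat \<Rightarrow> (nat \<Rightarrow> nat \<Rightarrow> complex) \<Rightarrow> (nat \<Rightarrow> nat \<Rightarrow> complex) \<Rightarrow> nat \<Rightarrow> nat \<Rightarrow> complex" where
  "mmul n A B = (\<lambda>i j. \<Sum>k<n. A i k * B k j)"

definition meq :: "nat \<Rightarrow> (nat \<Rightarrow> nat \<Rightarrow> complex) \<Rightarrow> (nat \<Rightarrow> nat \<Rightarrow> complex) \<Rightarrow> bool" where
  "meq n A B \<longleftrightarrow> (\<forall>i<n. \<forall>j<n. A i j = B i j)"

definition strongly_irreducible :: "nat \<Rightarrow> (nat \<Rightarrow> nat \<Rightarrow> complex) \<Rightarrow> bool" where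
  "strongly_irreducible n M \<longleftrightarrow>
     (\<forall>P. meq n (mmul n P M) (mmul n M P) \<and> meq n (mmul n P P) P \<longrightarrow>
          meq n P (\<lambda>_ _. 0) \<or> meq n P (\<lambda>i j. if i = j then 1 else 0))"

end

theory Submission
  imports Defs "Jordan_Normal_Form.Determinant"
begin

(* All operators involved are multiplication operators by (essentially
   bounded) matrix-valued functions, so the similarity can be built fibre by fibre.
   In the fibre over x the strictly upper triangular part N(x) of A_n(x) has the
   "Krylov" matrix S(x) whose k-th column is N(x)^(n-1-k) e_(n-1); it satisfies
   N(x) S(x) = S(x) J, with J the shift matrix, hence A_n(x) S(x) = S(x) T(x) where
   T(x) is the target Jordan-type matrix.  S(x) is upper triangular and its diagonal
   consists of products of superdiagonal entries phi_(i,i+1)(x); invertibility of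
   M_(phi_(i,i+1)) makes these essentially bounded below, so det S is essentially
   bounded below and the adjugate formula gives an L^infty inverse of S. *)


section \<open>Essentially bounded functions\<close>

lemma Linfty_const: "(\<lambda>x. c) \<in> Linfty \<mu>"
  unfolding Linfty_def by (auto intro!: exI[of _ "cmod c"])

lemma Linfty_measurable: "f \<in> Linfty \<mu> \<Longrightarrow> f \<in> borel_measurable \<mu>"
  unfolding Linfty_def by auto

lemma Linfty_nonneg_bound:
  assumes "f \<in> Linfty \<mu>" shows "\<exists>C\<ge>0. AE x in \<mu>. cmod (f x) \<le> C"
proof -
  obtain C where "AE x in \<mu>. cmod (f x) \<le> C" using assms unfolding Linfty_def by blast
  then show ?thesis by (intro exI[of _ "max C 0"]) (auto elim!: eventually_mono)
qed

lemma Linfty_add: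
  assumes "f \<in> Linfty \<mu>" "g \<in> Linfty \<mu>" shows "(\<lambda>x. f x + g x) \<in> Linfty \<mu>"
proof -
  obtain C D where C: "AE x in \<mu>. cmod (f x) \<le> C" and D: "AE x in \<mu>. cmod (g x) \<le> D"
    using assms unfolding Linfty_def by auto
  have "AE x in \<mu>. cmod (f x + g x) \<le> C + D"
    using C D by eventually_elim (meson add_mono norm_triangle_ineq order_trans)
  then show ?thesis using assms unfolding Linfty_def by auto
qed

lemma Linfty_mult:
  assumes "f \<in> Linfty \<mu>" "g \<in> Linfty \<mu>" shows "(\<lambda>x. f x * g x) \<in> Linfty \<mu>"
proof -
  obtain C where C: "C \<ge> 0" "AE x in \<mu>. cmod (f x) \<le> C" using Linfty_nonneg_bound[OF assms(1)] by auto
  obtain D where D: "D \<ge> 0" "AE x in \<mu>. cmod (g x) \<le> D" using Linfty_nonneg_bound[OF assms(2)] by auto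
  have "AE x in \<mu>. cmod (f x * g x) \<le> C * D"
    using C(2) D(2) by eventually_elim (simp add: norm_mult mult_mono C(1) D(1))
  then show ?thesis using assms unfolding Linfty_def by auto
qed

lemma Linfty_sum:
  assumes "finite A" "\<And>a. a \<in> A \<Longrightarrow> f a \<in> Linfty \<mu>" shows "(\<lambda>x. \<Sum>a\<in>A. f a x) \<in> Linfty \<mu>"
  using assms by (induction A rule: finite_induct) (auto intro!: Linfty_add Linfty_const)

lemma Linfty_prod:
  assumes "finite A" "\<And>a. a \<in> A \<Longrightarrow> f a \<in> Linfty \<mu>" shows "(\<lambda>x. \<Prod>a\<in>A. f a x) \<in> Linfty \<mu>"
  using assms by (induction A rule: finite_induct) (auto intro!: Linfty_mult Linfty_const)

lemma Linfty_uniform_bound: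
  fixes n :: nat
  assumes "\<And>i j. i < n \<Longrightarrow> j < n \<Longrightarrow> E i j \<in> Linfty \<mu>"
  shows "\<exists>C. AE x in \<mu>. \<forall>i<n. \<forall>j<n. cmod (E i j x) \<le> C"
proof -
  let ?I = "{..<n} \<times> {..<n}"
  have "\<forall>p\<in>?I. \<exists>C. AE x in \<mu>. cmod (E (fst p) (snd p) x) \<le> C"
    using assms unfolding Linfty_def by auto
  then obtain C where C: "\<And>p. p \<in> ?I \<Longrightarrow> AE x in \<mu>. cmod (E (fst p) (snd p) x) \<le> C p"
    by metis
  define D where "D = (\<Sum>p\<in>?I. \<bar>C p\<bar>)"
  have CD: "C p \<le> D" if "p \<in> ?I" for p
  proof -
    have "\<bar>C p\<bar> \<le> D" unfolding D_def by (rule member_le_sum) (use that in auto)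
    then show ?thesis by linarith
  qed
  have "AE x in \<mu>. \<forall>p\<in>?I. cmod (E (fst p) (snd p) x) \<le> D"
  proof (rule AE_finite_allI)
    fix p assume p: "p \<in> ?I"
    show "AE x in \<mu>. cmod (E (fst p) (snd p) x) \<le> D"
      using C[OF p] CD[OF p] by (auto elim!: eventually_mono)
  qed simp
  then show ?thesis by (intro exI[of _ D]) (auto elim!: eventually_mono)
qed

definition ess_bounded_below :: "'a measure \<Rightarrow> ('a \<Rightarrow> complex) \<Rightarrow> bool" where
  "ess_bounded_below \<mu> f \<longleftrightarrow> (\<exists>c>0. AE x in \<mu>. c \<le> cmod (f x))"

lemma ess_bounded_below_prod:
  assumes "finite A" "\<And>a. a \<in> A \<Longrightarrow> ess_bounded_below \<mu> (f a)"
  shows "ess_bounded_below \<mu> (\<lambda>x. \<Prod>a\<in>A. f a x)"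
  using assms
proof (induction A rule: finite_induct)
  case empty then show ?case unfolding ess_bounded_below_def by (intro exI[of _ 1]) auto
next
  case (insert a A)
  obtain c where c: "c > 0" "AE x in \<mu>. c \<le> cmod (f a x)"
    using insert.prems unfolding ess_bounded_below_def by blast
  obtain d where d: "d > 0" "AE x in \<mu>. d \<le> cmod (\<Prod>a\<in>A. f a x)"
    using insert unfolding ess_bounded_below_def by blast
  have "AE x in \<mu>. c * d \<le> cmod (\<Prod>a\<in>insert a A. f a x)"
    using c(2) d(2) by eventually_elim
      (use insert.hyps c(1) d(1) in \<open>auto simp: norm_mult intro: mult_mono\<close>)
  then show ?case unfolding ess_bounded_below_def using c d by (intro exI[of _ "c * d"]) auto
qed

lemma Linfty_reciprocal:
  assumes "f \<in> borel_measurable \<mu>" "ess_bounded_below \<mu> f"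
  shows "(\<lambda>x. 1 / f x) \<in> Linfty \<mu>"
proof -
  obtain c where c: "c > 0" "AE x in \<mu>. c \<le> cmod (f x)"
    using assms(2) unfolding ess_bounded_below_def by blast
  have "AE x in \<mu>. cmod (1 / f x) \<le> 1 / c"
    using c(2) by eventually_elim (use c(1) in \<open>auto simp: norm_divide divide_simps\<close>)
  moreover have "(\<lambda>x. 1 / f x) \<in> borel_measurable \<mu>" using assms(1) by measurable
  ultimately show ?thesis unfolding Linfty_def by auto
qed


section \<open>Operator matrices with essentially bounded entries are bounded\<close>

text \<open>Fibrewise estimate: the i-th component of the image is controlled by the
  Euclidean norm of the fibre, via the mean/root-mean-square inequality.\<close>

lemma mult_opmat_pointwise_bound:
  assumes E: "\<forall>i<n. \<forall>j<n. cmod (E i j x) \<le> C" and i: "i < n"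
  shows "(cmod (mult_opmat n E f x i))\<^sup>2 \<le> (real n * C\<^sup>2) * (\<Sum>j<n. (cmod (f x j))\<^sup>2)"
proof -
  have "cmod (mult_opmat n E f x i) \<le> (\<Sum>j<n. cmod (E i j x * f x j))"
    unfolding mult_opmat_def by (rule norm_sum)
  also have "\<dots> \<le> (\<Sum>j<n. C * cmod (f x j))"
    using E i by (intro sum_mono) (auto simp: norm_mult intro!: mult_right_mono)
  also have "\<dots> = C * (\<Sum>j<n. cmod (f x j))" by (simp add: sum_distrib_left)
  finally have "(cmod (mult_opmat n E f x i))\<^sup>2 \<le> (C * (\<Sum>j<n. cmod (f x j)))\<^sup>2"
    by (intro power_mono) simp_all
  also have "\<dots> = C\<^sup>2 * (\<Sum>j<n. cmod (f x j))\<^sup>2" by (simp add: power_mult_distrib)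
  also have "\<dots> \<le> C\<^sup>2 * ((\<Sum>j<n. (cmod (f x j))\<^sup>2) * real n)"
    using sum_squared_le_sum_of_squares[of "\<lambda>j. cmod (f x j)" "{..<n}"]
    by (intro mult_left_mono) simp_all
  finally show ?thesis by (simp add: algebra_simps)
qed

lemma L2vec_dominated:
  assumes f: "f \<in> L2vec \<mu> n"
    and meas: "\<And>i. i < n \<Longrightarrow> (\<lambda>x. g x i) \<in> borel_measurable \<mu>"
    and bound: "AE x in \<mu>. \<forall>i<n. (cmod (g x i))\<^sup>2 \<le> K * (\<Sum>j<n. (cmod (f x j))\<^sup>2)"
  shows "g \<in> L2vec \<mu> n" and "L2norm \<mu> n g \<le> sqrt (real n * K) * L2norm \<mu> n f"
proof -
  have intf: "integrable \<mu> (\<lambda>x. (cmod (f x j))\<^sup>2)" if "j < n" for j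
    using f that unfolding L2vec_def by auto
  have dom: "integrable \<mu> (\<lambda>x. K * (\<Sum>j<n. (cmod (f x j))\<^sup>2))"
    using intf by (intro integrable_mult_right integrable_sum) auto
  have intg: "integrable \<mu> (\<lambda>x. (cmod (g x i))\<^sup>2)" if i: "i < n" for i
  proof (rule Bochner_Integration.integrable_bound[OF dom])
    show "(\<lambda>x. (cmod (g x i))\<^sup>2) \<in> borel_measurable \<mu>" using meas[OF i] by measurable
    show "AE x in \<mu>. norm ((cmod (g x i))\<^sup>2) \<le> norm (K * (\<Sum>j<n. (cmod (f x j))\<^sup>2))"
      using bound
    proof (rule eventually_mono)
      fix x assume "\<forall>i<n. (cmod (g x i))\<^sup>2 \<le> K * (\<Sum>j<n. (cmod (f x j))\<^sup>2)"
      then show "norm ((cmod (g x i))\<^sup>2) \<le> norm (K * (\<Sum>j<n. (cmod (f x j))\<^sup>2))"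
        using i abs_ge_self[of "K * (\<Sum>j<n. (cmod (f x j))\<^sup>2)"] by fastforce
    qed
  qed
  then show "g \<in> L2vec \<mu> n" unfolding L2vec_def using meas by blast
  have "(\<Sum>i<n. \<integral>x. (cmod (g x i))\<^sup>2 \<partial>\<mu>) \<le> (\<Sum>i<n. \<integral>x. K * (\<Sum>j<n. (cmod (f x j))\<^sup>2) \<partial>\<mu>)"
    by (intro sum_mono integral_mono_AE intg dom) (use bound in \<open>auto elim!: eventually_mono\<close>)
  also have "\<dots> = real n * K * (\<Sum>j<n. \<integral>x. (cmod (f x j))\<^sup>2 \<partial>\<mu>)"
  proof -
    have "(\<integral>x. (\<Sum>j<n. (cmod (f x j))\<^sup>2) \<partial>\<mu>) = (\<Sum>j<n. \<integral>x. (cmod (f x j))\<^sup>2 \<partial>\<mu>)"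
      by (rule Bochner_Integration.integral_sum) (auto intro: intf)
    then show ?thesis by simp
  qed
  finally show "L2norm \<mu> n g \<le> sqrt (real n * K) * L2norm \<mu> n f"
    unfolding L2norm_def by (metis real_sqrt_le_mono real_sqrt_mult)
qed

lemma mult_opmat_bounded:
  assumes E: "\<And>i j. i < n \<Longrightarrow> j < n \<Longrightarrow> E i j \<in> Linfty \<mu>"
  shows "bounded_op \<mu> n (mult_opmat n E)"
proof -
  obtain C where C: "AE x in \<mu>. \<forall>i<n. \<forall>j<n. cmod (E i j x) \<le> C"
    using Linfty_uniform_bound[of n E, OF E] by blast
  have bound: "AE x in \<mu>. \<forall>i<n. (cmod (mult_opmat n E f x i))\<^sup>2
      \<le> (real n * C\<^sup>2) * (\<Sum>j<n. (cmod (f x j))\<^sup>2)" for f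
    using C by eventually_elim (auto intro: mult_opmat_pointwise_bound)
  have meas: "(\<lambda>x. mult_opmat n E f x i) \<in> borel_measurable \<mu>"
    if f: "f \<in> L2vec \<mu> n" and i: "i < n" for f i
    unfolding mult_opmat_def
  proof (intro borel_measurable_sum borel_measurable_times)
    fix j assume "j \<in> {..<n}"
    then show "E i j \<in> borel_measurable \<mu>" "(\<lambda>x. f x j) \<in> borel_measurable \<mu>"
      using E[OF i, of j] f unfolding L2vec_def by (auto intro: Linfty_measurable)
  qed
  have eqv: "L2eqv \<mu> n (mult_opmat n E f) (mult_opmat n E g)" if "L2eqv \<mu> n f g" for f g
  proof -
    have "AE x in \<mu>. \<forall>j\<in>{..<n}. f x j = g x j"
      using that unfolding L2eqv_def by (intro AE_finite_allI) auto
    then have "AE x in \<mu>. mult_opmat n E f x i = mult_opmat n E g x i" for i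
      by eventually_elim (simp add: mult_opmat_def)
    then show ?thesis unfolding L2eqv_def by blast
  qed
  have lin: "L2eqv \<mu> n (mult_opmat n E (\<lambda>x i. a * f x i + b * g x i))
      (\<lambda>x i. a * mult_opmat n E f x i + b * mult_opmat n E g x i)" for f g and a b :: complex
    unfolding L2eqv_def mult_opmat_def by (simp add: sum.distrib sum_distrib_left algebra_simps)
  show ?thesis unfolding bounded_op_def
    using L2vec_dominated[OF _ meas bound] eqv lin by blast
qed


section \<open>Symbols of invertible multiplication operators are bounded below\<close>

lemma mult_op_eval: "mult_op \<psi> f x i = \<psi> x * f x 0"
  by (simp add: mult_op_def mult_opmat_def)

lemma L2norm_nonneg: "0 \<le> L2norm \<mu> n f"
  unfolding L2norm_def by (intro real_sqrt_ge_zero sum_nonneg integral_nonneg_AE) auto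

lemma L2norm_cong:
  assumes "f \<in> L2vec \<mu> n" "g \<in> L2vec \<mu> n" "L2eqv \<mu> n f g"
  shows "L2norm \<mu> n f = L2norm \<mu> n g"
proof -
  have "(\<integral>x. (cmod (f x i))\<^sup>2 \<partial>\<mu>) = (\<integral>x. (cmod (g x i))\<^sup>2 \<partial>\<mu>)" if i: "i < n" for i
  proof (rule integral_cong_AE)
    show "(\<lambda>x. (cmod (f x i))\<^sup>2) \<in> borel_measurable \<mu>" "(\<lambda>x. (cmod (g x i))\<^sup>2) \<in> borel_measurable \<mu>"
      using assms(1,2) i unfolding L2vec_def by auto
    show "AE x in \<mu>. (cmod (f x i))\<^sup>2 = (cmod (g x i))\<^sup>2"
      using assms(3) i unfolding L2eqv_def by (auto elim!: eventually_mono)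
  qed
  then show ?thesis unfolding L2norm_def by (auto intro!: arg_cong[where f=sqrt] sum.cong)
qed

lemma left_invertible_bounded_below:
  assumes T: "bounded_op \<mu> n T" and S: "bounded_op \<mu> n S" and ST: "op_eq \<mu> n (S \<circ> T) id"
  shows "\<exists>C\<ge>0. \<forall>f\<in>L2vec \<mu> n. L2norm \<mu> n f \<le> C * L2norm \<mu> n (T f)"
proof -
  obtain C where C: "\<And>g. g \<in> L2vec \<mu> n \<Longrightarrow> L2norm \<mu> n (S g) \<le> C * L2norm \<mu> n g"
    using S unfolding bounded_op_def by blast
  have "L2norm \<mu> n f \<le> max C 0 * L2norm \<mu> n (T f)" if f: "f \<in> L2vec \<mu> n" for f
  proof -
    have Tf: "T f \<in> L2vec \<mu> n" using T f unfolding bounded_op_def by blast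
    then have STf: "S (T f) \<in> L2vec \<mu> n" using S unfolding bounded_op_def by blast
    have "L2norm \<mu> n f = L2norm \<mu> n (S (T f))"
      using L2norm_cong[OF STf f] ST f unfolding op_eq_def by simp
    also have "\<dots> \<le> C * L2norm \<mu> n (T f)" using C[OF Tf] .
    also have "\<dots> \<le> max C 0 * L2norm \<mu> n (T f)" by (intro mult_right_mono) (auto simp: L2norm_nonneg)
    finally show ?thesis .
  qed
  then show ?thesis by (intro exI[of _ "max C 0"]) auto
qed

lemma bounded_mult_op_measurable:
  assumes "finite_measure \<mu>" "bounded_op \<mu> 1 (mult_op \<psi>)"
  shows "\<psi> \<in> borel_measurable \<mu>"
proof -
  interpret finite_measure \<mu> by fact
  have "(\<lambda>x i. 1::complex) \<in> L2vec \<mu> 1" unfolding L2vec_def by auto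
  then have "mult_op \<psi> (\<lambda>x i. 1) \<in> L2vec \<mu> 1" using assms(2) unfolding bounded_op_def by blast
  then show ?thesis unfolding L2vec_def by (simp add: mult_op_eval)
qed

lemma indicator_L2vec:
  assumes "finite_measure \<mu>" "A \<in> sets \<mu>"
  shows "(\<lambda>x (i::nat). indicator A x :: complex) \<in> L2vec \<mu> 1"
    and "L2norm \<mu> 1 (\<lambda>x (i::nat). indicator A x :: complex) = sqrt (measure \<mu> A)"
proof -
  interpret finite_measure \<mu> by fact
  have sq: "(\<lambda>x. (cmod (indicator A x :: complex))\<^sup>2) = (indicator A :: _ \<Rightarrow> real)"
    by (auto simp: indicator_def)
  show "(\<lambda>x (i::nat). indicator A x :: complex) \<in> L2vec \<mu> 1"
    unfolding L2vec_def using assms(2) integrable_real_indicator[of A \<mu>]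
    by (auto simp: sq less_top[symmetric])
  show "L2norm \<mu> 1 (\<lambda>x (i::nat). indicator A x :: complex) = sqrt (measure \<mu> A)"
    unfolding L2norm_def sq using assms(2) by (simp add: Int_absorb2 sets.sets_into_space)
qed

lemma L2norm_mult_op_indicator:
  assumes fm: "finite_measure \<mu>" and A: "A \<in> sets \<mu>"
    and small: "\<And>x. x \<in> A \<Longrightarrow> cmod (\<psi> x) \<le> c" and c: "0 \<le> c"
    and L2: "mult_op \<psi> (\<lambda>x i. indicator A x) \<in> L2vec \<mu> 1"
  shows "L2norm \<mu> 1 (mult_op \<psi> (\<lambda>x i. indicator A x)) \<le> c * sqrt (measure \<mu> A)"
proof -
  interpret finite_measure \<mu> by (rule fm)
  let ?g = "mult_op \<psi> (\<lambda>x i. indicator A x)"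
  have "(\<integral>x. (cmod (?g x 0))\<^sup>2 \<partial>\<mu>) \<le> (\<integral>x. c\<^sup>2 * indicator A x \<partial>\<mu>)"
  proof (rule integral_mono)
    show "integrable \<mu> (\<lambda>x. (cmod (?g x 0))\<^sup>2)" using L2 unfolding L2vec_def by auto
    show "integrable \<mu> (\<lambda>x. c\<^sup>2 * indicator A x)" using A
      by (intro integrable_mult_right integrable_real_indicator) (simp_all add: less_top[symmetric])
    fix x show "(cmod (?g x 0))\<^sup>2 \<le> c\<^sup>2 * indicator A x"
      using small[of x] c by (cases "x \<in> A") (auto simp: mult_op_eval norm_mult intro: power_mono)
  qed
  also have "\<dots> = c\<^sup>2 * measure \<mu> A" using A by (simp add: Int_absorb2 sets.sets_into_space)
  finally have "sqrt (\<integral>x. (cmod (?g x 0))\<^sup>2 \<partial>\<mu>) \<le> sqrt (c\<^sup>2 * measure \<mu> A)"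
    by (rule real_sqrt_le_mono)
  then show ?thesis unfolding L2norm_def using c by (simp add: real_sqrt_mult)
qed

text \<open>If M_psi is invertible, then psi is essentially bounded below: otherwise the
  indicator f of the set where |psi| < c, for c small against the norm of the
  inverse, would satisfy ||f|| <= C ||psi f|| <= C c ||f|| < ||f||.\<close>

lemma invertible_mult_op_bounded_below:
  assumes fm: "finite_measure \<mu>" and inv: "invertible_op \<mu> 1 (mult_op \<psi>)"
  shows "ess_bounded_below \<mu> \<psi>"
proof -
  interpret finite_measure \<mu> by (rule fm)
  have T: "bounded_op \<mu> 1 (mult_op \<psi>)" using inv unfolding invertible_op_def by blast
  obtain C where C: "C \<ge> 0" "\<And>f. f \<in> L2vec \<mu> 1 \<Longrightarrow> L2norm \<mu> 1 f \<le> C * L2norm \<mu> 1 (mult_op \<psi> f)"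
    using inv left_invertible_bounded_below[OF T] unfolding invertible_op_def by blast
  define c where "c = 1 / (C + 1)"
  have c: "c > 0" "C * c < 1" using C(1) unfolding c_def by (auto simp: field_simps)
  have "AE x in \<mu>. c \<le> cmod (\<psi> x)"
  proof (rule ccontr)
    assume nAE: "\<not> (AE x in \<mu>. c \<le> cmod (\<psi> x))"
    define A where "A = {x \<in> space \<mu>. cmod (\<psi> x) < c}"
    have A: "A \<in> sets \<mu>" unfolding A_def using bounded_mult_op_measurable[OF fm T] by measurable
    have "emeasure \<mu> A \<noteq> 0"
      using nAE AE_iff_measurable[OF A, of "\<lambda>x. c \<le> cmod (\<psi> x)"] by (auto simp: A_def not_le)
    then have pos: "sqrt (measure \<mu> A) > 0"
      using emeasure_eq_measure[of A] measure_nonneg[of \<mu> A] by (simp add: less_le)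
    define f where "f = (\<lambda>x (i::nat). indicator A x :: complex)"
    have f: "f \<in> L2vec \<mu> 1" "L2norm \<mu> 1 f = sqrt (measure \<mu> A)"
      unfolding f_def using indicator_L2vec[OF fm A] by auto
    have Tf: "mult_op \<psi> f \<in> L2vec \<mu> 1" using T f(1) unfolding bounded_op_def by blast
    have "sqrt (measure \<mu> A) \<le> C * L2norm \<mu> 1 (mult_op \<psi> f)" using C(2)[OF f(1)] f(2) by simp
    also have "\<dots> \<le> C * (c * sqrt (measure \<mu> A))"
      using L2norm_mult_op_indicator[OF fm A, of \<psi> c] Tf c(1) C(1)
      by (intro mult_left_mono) (auto simp: f_def A_def)
    also have "\<dots> < sqrt (measure \<mu> A)" using c(2) pos by (simp add: mult.assoc[symmetric])
    finally show False by simp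
  qed
  then show ?thesis unfolding ess_bounded_below_def using c(1) by blast
qed


section \<open>Matrix-valued essentially bounded functions\<close>

definition Linfty_mat :: "'a measure \<Rightarrow> nat \<Rightarrow> ('a \<Rightarrow> complex mat) \<Rightarrow> bool" where
  "Linfty_mat \<mu> n M \<longleftrightarrow> (\<forall>x. M x \<in> carrier_mat n n) \<and> (\<forall>i<n. \<forall>j<n. (\<lambda>x. M x $$ (i,j)) \<in> Linfty \<mu>)"

lemma Linfty_mat_carrier: "Linfty_mat \<mu> n M \<Longrightarrow> M x \<in> carrier_mat n n"
  unfolding Linfty_mat_def by blast

lemma Linfty_mat_entry: "Linfty_mat \<mu> n M \<Longrightarrow> i < n \<Longrightarrow> j < n \<Longrightarrow> (\<lambda>x. M x $$ (i,j)) \<in> Linfty \<mu>"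
  unfolding Linfty_mat_def by blast

lemma Linfty_mat_of_entries:
  assumes "\<And>i j. i < n \<Longrightarrow> j < n \<Longrightarrow> (\<lambda>x. E i j x) \<in> Linfty \<mu>"
  shows "Linfty_mat \<mu> n (\<lambda>x. mat n n (\<lambda>(i,j). E i j x))"
  using assms unfolding Linfty_mat_def by auto

lemma mat_mult_entry:
  assumes "A \<in> carrier_mat n n" "B \<in> carrier_mat n n" "i < n" "j < n"
  shows "(A * B) $$ (i,j) = (\<Sum>k<n. A $$ (i,k) * B $$ (k,j))"
  using assms by (simp add: scalar_prod_def carrier_matD atLeast0LessThan)

lemma Linfty_mat_mult:
  assumes M: "Linfty_mat \<mu> n M" and N: "Linfty_mat \<mu> n N"
  shows "Linfty_mat \<mu> n (\<lambda>x. M x * N x)"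
  unfolding Linfty_mat_def
proof (intro conjI allI impI)
  fix x show "M x * N x \<in> carrier_mat n n"
    using Linfty_mat_carrier[OF M] Linfty_mat_carrier[OF N] by (rule mult_carrier_mat)
next
  fix i j assume ij: "i < n" "j < n"
  have "(M x * N x) $$ (i,j) = (\<Sum>k<n. M x $$ (i,k) * N x $$ (k,j))" for x
    using ij by (intro mat_mult_entry Linfty_mat_carrier[OF M] Linfty_mat_carrier[OF N])
  then show "(\<lambda>x. (M x * N x) $$ (i,j)) \<in> Linfty \<mu>"
    using ij by (auto intro!: Linfty_sum Linfty_mult Linfty_mat_entry[OF M] Linfty_mat_entry[OF N])
qed

lemma Linfty_mat_pow:
  assumes M: "Linfty_mat \<mu> n M" shows "Linfty_mat \<mu> n (\<lambda>x. M x ^\<^sub>m k)"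
proof (induction k)
  case 0
  have "M x ^\<^sub>m 0 = mat n n (\<lambda>(i,j). if i = j then 1 else 0)" for x
    using Linfty_mat_carrier[OF M, of x] by (simp add: one_mat_def carrier_matD)
  then show ?case
    using Linfty_mat_of_entries[of n "\<lambda>i j x. if i = j then 1 else 0"] by (simp add: Linfty_const)
next
  case (Suc k)
  then show ?case using Linfty_mat_mult[OF Suc M] by simp
qed

lemma Linfty_mat_smult:
  assumes M: "Linfty_mat \<mu> n M" and f: "f \<in> Linfty \<mu>"
  shows "Linfty_mat \<mu> n (\<lambda>x. f x \<cdot>\<^sub>m M x)"
  unfolding Linfty_mat_def
proof (intro conjI allI impI)
  fix x show "f x \<cdot>\<^sub>m M x \<in> carrier_mat n n" using Linfty_mat_carrier[OF M] by simp
next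
  fix i j assume ij: "i < n" "j < n"
  then have "(f x \<cdot>\<^sub>m M x) $$ (i,j) = f x * M x $$ (i,j)" for x
    using Linfty_mat_carrier[OF M, of x] by auto
  then show "(\<lambda>x. (f x \<cdot>\<^sub>m M x) $$ (i,j)) \<in> Linfty \<mu>"
    using Linfty_mult[OF f Linfty_mat_entry[OF M ij]] by simp
qed

lemma Linfty_mat_det:
  assumes M: "Linfty_mat \<mu> n M" shows "(\<lambda>x. det (M x)) \<in> Linfty \<mu>"
proof -
  have e: "det (M x) = (\<Sum>p\<in>{p. p permutes {0..<n}}. signof p * (\<Prod>i = 0..<n. M x $$ (i, p i)))" for x
    using Linfty_mat_carrier[OF M] by (rule det_def')
  show ?thesis unfolding e
  proof (intro Linfty_sum Linfty_mult Linfty_prod Linfty_const)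
    fix p i assume "p \<in> {p. p permutes {0..<n}}" and i: "i \<in> {0..<n}"
    then have "p i < n" using permutes_in_image by fastforce
    then show "(\<lambda>x. M x $$ (i, p i)) \<in> Linfty \<mu>" using Linfty_mat_entry[OF M] i by simp
  qed (simp_all add: finite_permutations)
qed

lemma Linfty_mat_delete:
  assumes M: "Linfty_mat \<mu> n M"
  shows "Linfty_mat \<mu> (n - 1) (\<lambda>x. mat_delete (M x) i j)"
  unfolding Linfty_mat_def
proof (intro conjI allI impI)
  fix x show "mat_delete (M x) i j \<in> carrier_mat (n - 1) (n - 1)"
    using Linfty_mat_carrier[OF M] by (rule mat_delete_carrier)
next
  fix a b assume ab: "a < n - 1" "b < n - 1"
  have "mat_delete (M x) i j $$ (a,b) = M x $$ (if a < i then a else Suc a, if b < j then b else Suc b)" for x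
    using ab Linfty_mat_carrier[OF M, of x] unfolding mat_delete_def by auto
  moreover have "(if a < i then a else Suc a) < n" "(if b < j then b else Suc b) < n" using ab by auto
  ultimately show "(\<lambda>x. mat_delete (M x) i j $$ (a,b)) \<in> Linfty \<mu>"
    using Linfty_mat_entry[OF M] by presburger
qed

lemma Linfty_mat_adj:
  assumes M: "Linfty_mat \<mu> n M" shows "Linfty_mat \<mu> n (\<lambda>x. adj_mat (M x))"
  unfolding Linfty_mat_def
proof (intro conjI allI impI)
  fix x show "adj_mat (M x) \<in> carrier_mat n n" using Linfty_mat_carrier[OF M] adj_mat(1) by blast
next
  fix i j assume ij: "i < n" "j < n"
  have "adj_mat (M x) $$ (i,j) = (-1)^(j+i) * det (mat_delete (M x) j i)" for x
    using ij Linfty_mat_carrier[OF M, of x] unfolding adj_mat_def cofactor_def by auto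
  then show "(\<lambda>x. adj_mat (M x) $$ (i,j)) \<in> Linfty \<mu>"
    by (simp add: Linfty_mult Linfty_const Linfty_mat_det[OF Linfty_mat_delete[OF M]])
qed

text \<open>Adjugate formula: an L^infty matrix function whose determinant is essentially
  bounded below has an a.e. inverse that is again L^infty.\<close>

lemma Linfty_mat_inverse:
  assumes M: "Linfty_mat \<mu> n M" and d: "ess_bounded_below \<mu> (\<lambda>x. det (M x))"
  shows "\<exists>W. Linfty_mat \<mu> n W \<and> (AE x in \<mu>. W x * M x = 1\<^sub>m n \<and> M x * W x = 1\<^sub>m n)"
proof (intro exI conjI)
  define W where "W x = (1 / det (M x)) \<cdot>\<^sub>m adj_mat (M x)" for x
  have Mc: "M x \<in> carrier_mat n n" for x by (rule Linfty_mat_carrier[OF M])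
  show "Linfty_mat \<mu> n W" unfolding W_def
    using Linfty_mat_smult[OF Linfty_mat_adj[OF M]
        Linfty_reciprocal[OF Linfty_measurable[OF Linfty_mat_det[OF M]] d]] .
  obtain c where c: "c > 0" "AE x in \<mu>. c \<le> cmod (det (M x))"
    using d unfolding ess_bounded_below_def by blast
  show "AE x in \<mu>. W x * M x = 1\<^sub>m n \<and> M x * W x = 1\<^sub>m n"
    using c(2)
  proof eventually_elim
    case (elim x)
    then have "det (M x) \<noteq> 0" using c(1) by auto
    moreover have "W x * M x = (1 / det (M x)) \<cdot>\<^sub>m (adj_mat (M x) * M x)"
      unfolding W_def by (rule mult_smult_assoc_mat[OF adj_mat(1)[OF Mc] Mc])
    moreover have "M x * W x = (1 / det (M x)) \<cdot>\<^sub>m (M x * adj_mat (M x))"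
      unfolding W_def by (rule mult_smult_distrib[OF Mc adj_mat(1)[OF Mc]])
    ultimately show ?case unfolding adj_mat(2,3)[OF Mc] by (auto intro!: eq_matI)
  qed
qed


section \<open>Krylov matrices of strictly upper triangular matrices\<close>

definition strictly_upper :: "nat \<Rightarrow> 'a::zero mat \<Rightarrow> bool" where
  "strictly_upper n N \<longleftrightarrow> N \<in> carrier_mat n n \<and> (\<forall>i<n. \<forall>j<n. j \<le> i \<longrightarrow> N $$ (i,j) = 0)"

definition shift_mat :: "nat \<Rightarrow> 'a::{zero,one} mat" where
  "shift_mat n = mat n n (\<lambda>(i,j). if j = i + 1 then 1 else 0)"

definition krylov_mat :: "nat \<Rightarrow> 'a::semiring_1 mat \<Rightarrow> 'a mat" where
  "krylov_mat n N = mat n n (\<lambda>(i,k). (N ^\<^sub>m (n - 1 - k)) $$ (i, n - 1))"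

lemma strictly_upper_carrier: "strictly_upper n N \<Longrightarrow> N \<in> carrier_mat n n"
  unfolding strictly_upper_def by blast

lemma pow_mat_commute:
  assumes N: "N \<in> carrier_mat n n"
  shows "N ^\<^sub>m m * N = N * N ^\<^sub>m m"
proof (induction m)
  case 0 then show ?case using N by (simp add: carrier_matD)
next
  case (Suc m)
  have "N ^\<^sub>m Suc m * N = (N * N ^\<^sub>m m) * N" using Suc by simp
  also have "\<dots> = N * (N ^\<^sub>m m * N)" using N by (simp add: assoc_mult_mat[of _ n n _ n _ n])
  finally show ?case by simp
qed

lemma strictly_upper_pow_zero:
  fixes N :: "'a::comm_ring_1 mat"
  assumes N: "strictly_upper n N" and "i < n" "j < n" "j < i + m"
  shows "(N ^\<^sub>m m) $$ (i,j) = 0"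
  using assms(3,4)
proof (induction m arbitrary: j)
  case 0
  then show ?case using strictly_upper_carrier[OF N] assms(2) by (simp add: carrier_matD)
next
  case (Suc m)
  have Nc: "N \<in> carrier_mat n n" using N by (rule strictly_upper_carrier)
  have "(N ^\<^sub>m Suc m) $$ (i,j) = (\<Sum>k<n. (N ^\<^sub>m m) $$ (i,k) * N $$ (k,j))"
    unfolding pow_mat.simps by (rule mat_mult_entry) (use Suc.prems assms(2) Nc in auto)
  also have "\<dots> = 0"
  proof (intro sum.neutral ballI)
    fix k assume k: "k \<in> {..<n}"
    show "(N ^\<^sub>m m) $$ (i,k) * N $$ (k,j) = 0"
    proof (cases "k < i + m")
      case True then show ?thesis using Suc k by simp
    next
      case False then show ?thesis using Suc.prems k N by (simp add: strictly_upper_def)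
    qed
  qed
  finally show ?case .
qed

lemma strictly_upper_pow_superdiag:
  fixes N :: "'a::comm_ring_1 mat"
  assumes N: "strictly_upper n N" and "i + m < n"
  shows "(N ^\<^sub>m m) $$ (i,i+m) = (\<Prod>l<m. N $$ (i+l, i+l+1))"
  using assms(2)
proof (induction m)
  case 0
  then show ?case using strictly_upper_carrier[OF N] by (simp add: carrier_matD)
next
  case (Suc m)
  have Nc: "N \<in> carrier_mat n n" using N by (rule strictly_upper_carrier)
  have rest: "(\<Sum>k\<in>{..<n} - {i+m}. (N ^\<^sub>m m) $$ (i,k) * N $$ (k,i + Suc m)) = 0"
  proof (intro sum.neutral ballI)
    fix k assume k: "k \<in> {..<n} - {i+m}"
    show "(N ^\<^sub>m m) $$ (i,k) * N $$ (k,i + Suc m) = 0"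
    proof (cases "k < i + m")
      case True then show ?thesis using strictly_upper_pow_zero[OF N, of i k m] Suc.prems k by simp
    next
      case False then show ?thesis using Suc.prems k N by (simp add: strictly_upper_def)
    qed
  qed
  have "(N ^\<^sub>m Suc m) $$ (i,i + Suc m) = (\<Sum>k<n. (N ^\<^sub>m m) $$ (i,k) * N $$ (k,i + Suc m))"
    unfolding pow_mat.simps by (rule mat_mult_entry) (use Suc.prems Nc in auto)
  also have "\<dots> = (N ^\<^sub>m m) $$ (i,i+m) * N $$ (i+m,i + Suc m)"
    using Suc.prems rest by (subst sum.remove[of _ "i+m"]) auto
  finally show ?case using Suc by simp
qed

lemma krylov_mat_carrier: "krylov_mat n N \<in> carrier_mat n n"
  unfolding krylov_mat_def by (rule mat_carrier)

lemma shift_mat_carrier: "shift_mat n \<in> carrier_mat n n"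
  unfolding shift_mat_def by (rule mat_carrier)

text \<open>N K = K J: multiplying by N moves each Krylov column to the previous one
  (and kills the first, since N^n = 0).\<close>

lemma krylov_mat_shift:
  fixes N :: "'a::comm_ring_1 mat"
  assumes N: "strictly_upper n N"
  shows "N * krylov_mat n N = krylov_mat n N * shift_mat n"
proof (rule eq_matI)
  fix i k assume "i < dim_row (krylov_mat n N * shift_mat n)" "k < dim_col (krylov_mat n N * shift_mat n)"
  then have i: "i < n" and k: "k < n" by (auto simp: krylov_mat_def shift_mat_def)
  have Nc: "N \<in> carrier_mat n n" using N by (rule strictly_upper_carrier)
  note K = krylov_mat_carrier[of n N] and J = shift_mat_carrier[of n]
  have "(N * krylov_mat n N) $$ (i,k) = (\<Sum>l<n. N $$ (i,l) * krylov_mat n N $$ (l,k))"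
    by (rule mat_mult_entry[OF Nc K i k])
  also have "\<dots> = (\<Sum>l<n. N $$ (i,l) * (N ^\<^sub>m (n - 1 - k)) $$ (l, n - 1))"
    using k by (intro sum.cong refl) (simp add: krylov_mat_def)
  also have "\<dots> = (N * N ^\<^sub>m (n - 1 - k)) $$ (i, n - 1)"
    by (rule mat_mult_entry[symmetric]) (use Nc i k in auto)
  also have "\<dots> = (N ^\<^sub>m Suc (n - 1 - k)) $$ (i, n - 1)"
    using pow_mat_commute[OF Nc] by simp
  finally have L: "(N * krylov_mat n N) $$ (i,k) = (N ^\<^sub>m Suc (n - 1 - k)) $$ (i, n - 1)" .
  have R: "(krylov_mat n N * shift_mat n) $$ (i,k) = (\<Sum>l<n. krylov_mat n N $$ (i,l) * (if k = l + 1 then 1 else 0))"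
    unfolding mat_mult_entry[OF K J i k] using k by (intro sum.cong refl) (simp add: shift_mat_def)
  show "(N * krylov_mat n N) $$ (i,k) = (krylov_mat n N * shift_mat n) $$ (i,k)"
  proof (cases k)
    case 0
    then show ?thesis unfolding L R using strictly_upper_pow_zero[OF N i, of "n - 1"] i k by simp
  next
    case (Suc k')
    have "(\<Sum>l<n. krylov_mat n N $$ (i,l) * (if k = l + 1 then 1 else 0)) = krylov_mat n N $$ (i,k')"
      using Suc k by (simp add: if_distrib[of "\<lambda>x. _ * x"] sum.delta' cong: if_cong)
    then show ?thesis unfolding L R using Suc i k by (simp add: krylov_mat_def Suc_diff_Suc)
  qed
qed (use N in \<open>auto simp: krylov_mat_def shift_mat_def strictly_upper_def\<close>)

lemma krylov_mat_intertwines: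
  fixes N :: "'a::comm_ring_1 mat"
  assumes N: "strictly_upper n N"
  shows "(c \<cdot>\<^sub>m 1\<^sub>m n + N) * krylov_mat n N = krylov_mat n N * (c \<cdot>\<^sub>m 1\<^sub>m n + shift_mat n)"
proof -
  have Nc: "N \<in> carrier_mat n n" using N by (rule strictly_upper_carrier)
  note K = krylov_mat_carrier[of n N] and J = shift_mat_carrier[of n]
  have "(c \<cdot>\<^sub>m 1\<^sub>m n + N) * krylov_mat n N = c \<cdot>\<^sub>m krylov_mat n N + N * krylov_mat n N"
    using Nc K by (simp add: add_mult_distrib_mat[of _ n n] mult_smult_assoc_mat[of _ n n _ n])
  also have "\<dots> = krylov_mat n N * (c \<cdot>\<^sub>m 1\<^sub>m n) + krylov_mat n N * shift_mat n"
    using K by (simp add: krylov_mat_shift[OF N] mult_smult_distrib[of _ n n _ n])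
  also have "\<dots> = krylov_mat n N * (c \<cdot>\<^sub>m 1\<^sub>m n + shift_mat n)"
    by (rule mult_add_distrib_mat[OF K _ J, symmetric]) simp
  finally show ?thesis .
qed

text \<open>K is upper triangular with diagonal entries products of superdiagonal entries of N.\<close>

lemma krylov_mat_det:
  fixes N :: "'a::comm_ring_1 mat"
  assumes N: "strictly_upper n N"
  shows "det (krylov_mat n N) = (\<Prod>k<n. \<Prod>l<n - 1 - k. N $$ (k+l, k+l+1))"
proof -
  have "upper_triangular (krylov_mat n N)"
    using strictly_upper_pow_zero[OF N] by (auto simp: upper_triangular_def krylov_mat_def)
  then have "det (krylov_mat n N) = prod_list (diag_mat (krylov_mat n N))"
    by (rule det_upper_triangular[OF _ krylov_mat_carrier])
  also have "\<dots> = (\<Prod>k<n. krylov_mat n N $$ (k,k))"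
    by (simp add: prod_list_diag_prod krylov_mat_def atLeast0LessThan)
  also have "\<dots> = (\<Prod>k<n. \<Prod>l<n - 1 - k. N $$ (k+l, k+l+1))"
  proof (intro prod.cong refl)
    fix k assume k: "k \<in> {..<n}"
    then have "krylov_mat n N $$ (k,k) = (N ^\<^sub>m (n - 1 - k)) $$ (k, k + (n - 1 - k))"
      by (simp add: krylov_mat_def)
    also have "\<dots> = (\<Prod>l<n - 1 - k. N $$ (k+l, k+l+1))"
      using k by (intro strictly_upper_pow_superdiag[OF N]) auto
    finally show "krylov_mat n N $$ (k,k) = (\<Prod>l<n - 1 - k. N $$ (k+l, k+l+1))" .
  qed
  finally show ?thesis .
qed

lemma Linfty_mat_krylov:
  assumes N: "Linfty_mat \<mu> n N" shows "Linfty_mat \<mu> n (\<lambda>x. krylov_mat n (N x))"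
  unfolding Linfty_mat_def
  using krylov_mat_carrier Linfty_mat_entry[OF Linfty_mat_pow[OF N]] by (auto simp: krylov_mat_def)


section \<open>From fibrewise similarity to operator similarity\<close>

definition fibre :: "nat \<Rightarrow> ('a \<Rightarrow> nat \<Rightarrow> complex) \<Rightarrow> 'a \<Rightarrow> complex vec" where
  "fibre n f x = vec n (\<lambda>i. f x i)"

lemma fibre_mult_opmat:
  "fibre n (mult_opmat n E f) x = mat n n (\<lambda>(i,j). E i j x) *\<^sub>v fibre n f x"
  by (rule eq_vecI) (auto simp: fibre_def mult_opmat_def scalar_prod_def atLeast0LessThan)

lemma op_eq_fibrewise:
  assumes "\<And>f. f \<in> L2vec \<mu> n \<Longrightarrow> AE x in \<mu>. fibre n (S f) x = fibre n (T f) x"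
  shows "op_eq \<mu> n S T"
  unfolding op_eq_def L2eqv_def
proof (intro ballI allI impI)
  fix f i assume f: "f \<in> L2vec \<mu> n" and i: "i < n"
  show "AE x in \<mu>. S f x i = T f x i"
    using assms[OF f]
  proof (rule eventually_mono)
    fix x assume "fibre n (S f) x = fibre n (T f) x"
    then have "fibre n (S f) x $ i = fibre n (T f) x $ i" by simp
    then show "S f x i = T f x i" using i by (simp add: fibre_def)
  qed
qed

definition mat_op :: "nat \<Rightarrow> ('a \<Rightarrow> complex mat) \<Rightarrow> 'a op" where
  "mat_op n M = mult_opmat n (\<lambda>i j x. M x $$ (i,j))"

lemma fibre_mat_op:
  assumes "M x \<in> carrier_mat n n"
  shows "fibre n (mat_op n M f) x = M x *\<^sub>v fibre n f x"
proof -
  have "mat n n (\<lambda>(i,j). M x $$ (i,j)) = M x" using assms by (intro eq_matI) auto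
  then show ?thesis unfolding mat_op_def fibre_mult_opmat by simp
qed

lemma mat_op_bounded: "Linfty_mat \<mu> n M \<Longrightarrow> bounded_op \<mu> n (mat_op n M)"
  unfolding mat_op_def by (intro mult_opmat_bounded Linfty_mat_entry)

lemma fibrewise_similarity:
  assumes S: "Linfty_mat \<mu> n S" and W: "Linfty_mat \<mu> n W"
    and inv: "AE x in \<mu>. W x * S x = 1\<^sub>m n \<and> S x * W x = 1\<^sub>m n"
    and intertwine: "\<And>x. mat n n (\<lambda>(i,j). EA i j x) * S x = S x * mat n n (\<lambda>(i,j). EB i j x)"
  shows "\<exists>X Y. bounded_op \<mu> n X \<and> bounded_op \<mu> n Y \<and>
           op_eq \<mu> n (X \<circ> Y) id \<and> op_eq \<mu> n (Y \<circ> X) id \<and>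
           op_eq \<mu> n (X \<circ> mult_opmat n EA \<circ> Y) (mult_opmat n EB)"
proof (intro exI conjI)
  have Sc: "S x \<in> carrier_mat n n" and Wc: "W x \<in> carrier_mat n n" for x
    using Linfty_mat_carrier[OF S] Linfty_mat_carrier[OF W] by auto
  have v: "fibre n f x \<in> carrier_vec n" for f x by (simp add: fibre_def)
  note fibres = fibre_mat_op[of S, OF Sc] fibre_mat_op[of W, OF Wc] fibre_mult_opmat
  show "bounded_op \<mu> n (mat_op n W)" "bounded_op \<mu> n (mat_op n S)"
    using S W by (simp_all add: mat_op_bounded)
  show "op_eq \<mu> n (mat_op n W \<circ> mat_op n S) id"
  proof (rule op_eq_fibrewise)
    fix f show "AE x in \<mu>. fibre n ((mat_op n W \<circ> mat_op n S) f) x = fibre n (id f) x"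
      using inv by (rule eventually_mono) (simp add: fibres v assoc_mult_mat_vec[OF Wc Sc v, symmetric])
  qed
  show "op_eq \<mu> n (mat_op n S \<circ> mat_op n W) id"
  proof (rule op_eq_fibrewise)
    fix f show "AE x in \<mu>. fibre n ((mat_op n S \<circ> mat_op n W) f) x = fibre n (id f) x"
      using inv by (rule eventually_mono) (simp add: fibres v assoc_mult_mat_vec[OF Sc Wc v, symmetric])
  qed
  show "op_eq \<mu> n (mat_op n W \<circ> mult_opmat n EA \<circ> mat_op n S) (mult_opmat n EB)"
  proof (rule op_eq_fibrewise)
    fix f
    show "AE x in \<mu>. fibre n ((mat_op n W \<circ> mult_opmat n EA \<circ> mat_op n S) f) x = fibre n (mult_opmat n EB f) x"
      using inv
    proof (rule eventually_mono)
      fix x assume WS: "W x * S x = 1\<^sub>m n \<and> S x * W x = 1\<^sub>m n"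
      let ?A = "mat n n (\<lambda>(i,j). EA i j x)" and ?B = "mat n n (\<lambda>(i,j). EB i j x)"
      have "fibre n ((mat_op n W \<circ> mult_opmat n EA \<circ> mat_op n S) f) x = W x *\<^sub>v (?A *\<^sub>v (S x *\<^sub>v fibre n f x))"
        by (simp add: fibres)
      also have "\<dots> = W x *\<^sub>v ((?A * S x) *\<^sub>v fibre n f x)"
        by (simp add: assoc_mult_mat_vec[OF mat_carrier Sc v])
      also have "\<dots> = (W x * S x) *\<^sub>v (?B *\<^sub>v fibre n f x)"
        unfolding intertwine
        by (simp add: assoc_mult_mat_vec[OF Sc mat_carrier v]
            assoc_mult_mat_vec[OF Wc Sc mult_mat_vec_carrier[OF mat_carrier v]])
      also have "\<dots> = fibre n (mult_opmat n EB f) x"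
      proof -
        have "?B *\<^sub>v fibre n f x \<in> carrier_vec n" by (rule mult_mat_vec_carrier[OF mat_carrier v])
        then show ?thesis using WS by (simp add: fibre_mult_opmat)
      qed
      finally show "fibre n ((mat_op n W \<circ> mult_opmat n EA \<circ> mat_op n S) f) x = fibre n (mult_opmat n EB f) x" .
    qed
  qed
qed


theorem lemma2p4:
  fixes \<mu> :: "'a::metric_space measure" and K :: "'a set" and n :: nat
    and \<phi> :: "'a \<Rightarrow> complex" and \<phi>ij :: "nat \<Rightarrow> nat \<Rightarrow> 'a \<Rightarrow> complex"
  assumes "n \<ge> 1"
    and "compact K" and "finite_measure \<mu>" and "regular_borel_on K \<mu>"
    and "\<phi> \<in> Linfty \<mu>"
    and "\<And>i j. i < j \<Longrightarrow> j < n \<Longrightarrow> \<phi>ij i j \<in> Linfty \<mu>"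
    and "AE t in \<mu>. strongly_irreducible n
           (\<lambda>i j. if i = j then \<phi> t else if i < j then \<phi>ij i j t else 0)"
    and "\<And>i. i + 1 < n \<Longrightarrow> invertible_op \<mu> 1 (mult_op (\<phi>ij i (i + 1)))"
  shows "\<exists>X Y. bounded_op \<mu> n X \<and> bounded_op \<mu> n Y \<and>
           op_eq \<mu> n (X \<circ> Y) id \<and> op_eq \<mu> n (Y \<circ> X) id \<and>
           op_eq \<mu> n (X \<circ> mult_opmat n (\<lambda>i j. if i = j then \<phi> else if i < j then \<phi>ij i j else (\<lambda>_. 0)) \<circ> Y)
                    (mult_opmat n (\<lambda>i j. if i = j then \<phi> else if j = i + 1 then (\<lambda>_. 1) else (\<lambda>_. 0)))"
proof -
  note fm = assms(3) and \<phi>ij_Linfty = assms(6) and superdiag_inv = assms(8)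
  define N where "N x = mat n n (\<lambda>(i,j). if i < j then \<phi>ij i j x else 0)" for x
  define S where "S x = krylov_mat n (N x)" for x
  have N_upper: "strictly_upper n (N x)" for x by (simp add: strictly_upper_def N_def)
  have "Linfty_mat \<mu> n N" unfolding N_def
  proof (rule Linfty_mat_of_entries)
    fix i j assume "i < n" "j < n"
    then show "(\<lambda>x. if i < j then \<phi>ij i j x else 0) \<in> Linfty \<mu>"
      using \<phi>ij_Linfty[of i j] by (cases "i < j") (simp_all add: Linfty_const)
  qed
  then have S_Linfty: "Linfty_mat \<mu> n S" unfolding S_def by (rule Linfty_mat_krylov)
  have "ess_bounded_below \<mu> (\<phi>ij i (i + 1))" if "i + 1 < n" for i
    using invertible_mult_op_bounded_below[OF fm superdiag_inv[OF that]] .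
  then have "ess_bounded_below \<mu> (\<lambda>x. det (S x))"
    unfolding S_def krylov_mat_det[OF N_upper] by (intro ess_bounded_below_prod) (auto simp: N_def)
  then obtain W where W: "Linfty_mat \<mu> n W" "AE x in \<mu>. W x * S x = 1\<^sub>m n \<and> S x * W x = 1\<^sub>m n"
    using Linfty_mat_inverse[OF S_Linfty] by blast
  have "mat n n (\<lambda>(i,j). (if i = j then \<phi> else if i < j then \<phi>ij i j else (\<lambda>_. 0)) x) * S x
      = S x * mat n n (\<lambda>(i,j). (if i = j then \<phi> else if j = i + 1 then (\<lambda>_. 1) else (\<lambda>_. 0)) x)" for x
  proof -
    have "mat n n (\<lambda>(i,j). (if i = j then \<phi> else if i < j then \<phi>ij i j else (\<lambda>_. 0)) x) = \<phi> x \<cdot>\<^sub>m 1\<^sub>m n + N x"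
      and "mat n n (\<lambda>(i,j). (if i = j then \<phi> else if j = i + 1 then (\<lambda>_. 1) else (\<lambda>_. 0)) x) = \<phi> x \<cdot>\<^sub>m 1\<^sub>m n + shift_mat n"
      by (auto simp: N_def shift_mat_def)
    then show ?thesis unfolding S_def by (simp add: krylov_mat_intertwines[OF N_upper])
  qed
  then show ?thesis by (rule fibrewise_similarity[OF S_Linfty W])
qed

end
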